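(* Let $l$ and $m$ be integers with $l \geqslant 2$ and $0 \leqslant m \leqslant 4l$. Then \[ f(l,m) := \sum_{j=0}^{\min\{l, \lfloor m/2\rfloor\}} \binom{l}{j}\binom{4l}{2m-4j} \geqslant \binom{4l}{m}. \]
   Context: Convention: $\binom{a}{b} = 0$ if $b > a$. *)

theory Defs
  imports Main
begin

end

theory Submission imports Defs "HOL-Computational_Algebra.Polynomial" begin

text \<open>
  Both sides are coefficients of \<open>x\<^sup>2\<^sup>m\<close>: the sum in
  \<open>(1 + x\<^sup>4)\<^sup>l (1 + x)\<^sup>4\<^sup>l = ((1 + x\<^sup>4)(1 + x)\<^sup>4)\<^sup>l\<close>
  and the binomial coefficient in \<open>(1 + x\<^sup>2)\<^sup>4\<^sup>l = ((1 + x\<^sup>2)\<^sup>4)\<^sup>l\<close>.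
  The coefficientwise inequality \<open>((1 + x\<^sup>2)\<^sup>4)\<^sup>l \<le> ((1 + x\<^sup>4)(1 + x)\<^sup>4)\<^sup>l\<close>
  fails for \<open>l = 1\<close> but holds for \<open>l = 2\<close> and \<open>l = 3\<close> by direct computation;
  since it is preserved by products of polynomials with nonnegative coefficients
  and every \<open>l \<ge> 2\<close> is a sum of 2s and 3s, it holds for all \<open>l \<ge> 2\<close>.
\<close>

definition coeffwise_le :: "nat poly \<Rightarrow> nat poly \<Rightarrow> bool" where
  "coeffwise_le p q \<longleftrightarrow> (\<forall>n. coeff p n \<le> coeff q n)"

lemma coeffwise_le_mult:
  "coeffwise_le p q \<Longrightarrow> coeffwise_le p' q' \<Longrightarrow> coeffwise_le (p * p') (q * q')"
  unfolding coeffwise_le_def coeff_mult by (auto intro!: sum_mono mult_mono)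

lemma coeffwise_le_if_coeffs_le:
  assumes "list_all2 (\<le>) (coeffs p) (coeffs q)"
  shows "coeffwise_le p q"
  unfolding coeffwise_le_def nth_default_coeffs_eq[symmetric]
  using assms by (auto simp: nth_default_def list_all2_conv_all_nth)

lemma coeffwise_le_power_if_square_cube:
  assumes "coeffwise_le (p ^ 2) (q ^ 2)" and "coeffwise_le (p ^ 3) (q ^ 3)" and "n \<ge> 2"
  shows "coeffwise_le (p ^ n) (q ^ n)"
  using \<open>n \<ge> 2\<close>
proof (induction n rule: less_induct)
  case (less n)
  show ?case
  proof (cases "n \<le> 3")
    case True
    with less.prems have "n = 2 \<or> n = 3" by auto
    with assms show ?thesis by auto
  next
    case False
    then have "coeffwise_le (p ^ (n - 2) * p ^ 2) (q ^ (n - 2) * q ^ 2)"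
      using less.IH assms(1) coeffwise_le_mult by simp
    moreover from False have "n - 2 + 2 = n" by simp
    ultimately show ?thesis by (metis power_add)
  qed
qed

lemma coeff_binomial_monom_power:
  assumes "k > 0"
  shows "coeff ((1 + monom 1 k) ^ n :: nat poly) i = (if k dvd i then n choose (i div k) else 0)"
proof -
  have expand: "((1::nat poly) + monom 1 k) ^ n = (\<Sum>j\<le>n. monom (n choose j) (k * j))"
    by (subst add.commute, subst binomial_ring)
       (simp add: monom_power mult.commute of_nat_monom mult_monom)
  have "coeff ((1 + monom 1 k) ^ n :: nat poly) i
      = (\<Sum>j\<le>n. if j = i div k \<and> k dvd i then n choose j else 0)"
    unfolding expand coeff_sum coeff_monom by (rule sum.cong) (use assms in auto)
  also have "\<dots> = (if k dvd i then n choose (i div k) else 0)"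
    by (cases "k dvd i") (auto simp: sum.delta' binomial_eq_0)
  finally show ?thesis .
qed

lemma coeff_binomial_monom_power_mult_binomial_power:
  assumes "k > 0"
  shows "coeff ((1 + monom 1 k) ^ a * (1 + monom 1 1) ^ b :: nat poly) n
       = (\<Sum>j\<le>n div k. (a choose j) * (b choose (n - k * j)))"
proof -
  define g where "g i = (if k dvd i then a choose (i div k) else 0) * (b choose (n - i))" for i
  have "coeff ((1 + monom 1 k) ^ a * (1 + monom 1 1) ^ b :: nat poly) n = (\<Sum>i\<le>n. g i)"
    unfolding coeff_mult g_def
    using coeff_binomial_monom_power[OF assms] coeff_binomial_monom_power[of 1] by simp
  also have "\<dots> = (\<Sum>i\<in>(\<lambda>j. k * j) ` {..n div k}. g i)"
  proof (rule sum.mono_neutral_right)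
    show "(\<lambda>j. k * j) ` {..n div k} \<subseteq> {..n}"
      by (auto simp: div_le_mono div_times_less_eq_dividend order_trans[OF mult_le_mono2])
    have "i \<in> (\<lambda>j. k * j) ` {..n div k}" if "i \<le> n" "k dvd i" for i
      using that by (auto intro!: image_eqI[of i _ "i div k"] div_le_mono)
    then show "\<forall>i\<in>{..n} - (\<lambda>j. k * j) ` {..n div k}. g i = 0"
      by (auto simp: g_def)
  qed simp
  also have "\<dots> = (\<Sum>j\<le>n div k. g (k * j))"
    using assms by (subst sum.reindex) (auto simp: inj_on_def)
  also have "\<dots> = (\<Sum>j\<le>n div k. (a choose j) * (b choose (n - k * j)))"
    using assms by (simp add: g_def)
  finally show ?thesis .
qed

lemma coeffwise_le_binomial_powers:
  assumes "l \<ge> 2"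
  shows "coeffwise_le ((1 + monom 1 2) ^ (4 * l))
                      ((1 + monom 1 4) ^ l * (1 + monom 1 1) ^ (4 * l))"
proof -
  let ?p = "(1 + monom 1 2) ^ 4 :: nat poly"
  let ?q = "(1 + monom 1 4) * (1 + monom 1 1) ^ 4 :: nat poly"
  have "coeffwise_le (?p ^ 2) (?q ^ 2)" and "coeffwise_le (?p ^ 3) (?q ^ 3)"
    by (rule coeffwise_le_if_coeffs_le, code_simp)+
  then have "coeffwise_le (?p ^ l) (?q ^ l)"
    using assms by (rule coeffwise_le_power_if_square_cube)
  then show ?thesis
    by (simp add: power_mult_distrib power_mult[symmetric] mult.commute)
qed

theorem lemma3p16:
  fixes l m :: nat
  assumes "l \<ge> 2" and "m \<le> 4 * l"
  shows "(\<Sum>j = 0..min l (m div 2). (l choose j) * ((4 * l) choose (2 * m - 4 * j)))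
           \<ge> (4 * l) choose m"
proof -
  have "(4 * l) choose m = coeff ((1 + monom 1 2) ^ (4 * l)) (2 * m)"
    using coeff_binomial_monom_power[of 2 "4 * l" "2 * m"] by simp
  also have "\<dots> \<le> coeff ((1 + monom 1 4) ^ l * (1 + monom 1 1) ^ (4 * l)) (2 * m)"
    using coeffwise_le_binomial_powers[OF assms(1)] unfolding coeffwise_le_def by blast
  also have "\<dots> = (\<Sum>j\<le>m div 2. (l choose j) * ((4 * l) choose (2 * m - 4 * j)))"
    using coeff_binomial_monom_power_mult_binomial_power[of 4 l "4 * l" "2 * m"] by simp
  also have "\<dots> = (\<Sum>j = 0..min l (m div 2). (l choose j) * ((4 * l) choose (2 * m - 4 * j)))"
    by (rule sum.mono_neutral_right) auto
  finally show ?thesis .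
qed

end
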